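(* Let $l^1 < l^2 < l^3$ and let $g : [l^1,l^3] \to \mathbb{R}$ be continuous (and defined at $0$), concave on $[l^1,l^2]$ and convex on $[l^2,l^3]$. Let $\alpha^1 = (g(l^2)-g(l^1))/(l^2-l^1)$. For $x \in [l^1,l^3]$ define the continuous relaxation of the Incremental Model $$g_{IM}(x) = \min\Big\{ g(l^1) + \alpha^1\phi^1 + \gamma^2 \;:\; \gamma^2 \ge [g(l^2 + \phi^2/\psi^2) - g(l^2)]\psi^2,\ x = l^1 + \phi^1 + \phi^2,\ (l^{s+1}-l^s)\psi^{s+1} \le \phi^s \le (l^{s+1}-l^s)\psi^s \ (s=1,2),\ \psi^1 = 1,\ \psi^3 = 0\Big\}$$ and the continuous relaxation of the Multiple Choice Model $$g_{MCM}(x) = \min\Big\{ g(0)y^2 + \alpha^1 x^1 + [g(l^1) - \alpha^1 l^1]y^1 + z^2 \;:\; x = x^1 + x^2,\ z^2 \ge [g(x^2/y^2) - g(0)]y^2,\ l^s y^s \le x^s \le l^{s+1}y^s\ (s=1,2),\ y^1 + y^2 = 1,\ y^1,y^2 \ge 0\Big\},$$ where a perspective term $[h(a/b)]b$ with $b=0$ (and hence $a=0$) is interpreted as $0$. Then $g_{IM}(x) = g_{MCM}(x)$ for every $x \in [l^1,l^3]$, i.e. the continuous relaxations of the Incremental Model and the Multiple Choice Model are equivalent.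
   Context: These are the two piecewise-convex formulations (with perspective reformulation on the convex interval and the secant on the concave interval) of a univariate function whose domain splits into a concave interval followed by a convex interval; the binary activation variables ($\psi^2$ in the Incremental Model, $y^1,y^2$ in the Multiple Choice Model) are relaxed to be continuous. *)

theory Defs
  imports "HOL-Analysis.Analysis"
begin

definition persp :: "(real \<Rightarrow> real) \<Rightarrow> real \<Rightarrow> real \<Rightarrow> real" where
  "persp h a b = (if b = 0 then 0 else h (a / b) * b)"

definition alpha1 :: "(real \<Rightarrow> real) \<Rightarrow> real \<Rightarrow> real \<Rightarrow> real" where
  "alpha1 g l1 l2 = (g l2 - g l1) / (l2 - l1)"

text \<open>Continuous relaxation of the Incremental Model (psi^1 = 1, psi^3 = 0 substituted).\<close>
definition g_IM :: "(real \<Rightarrow> real) \<Rightarrow> real \<Rightarrow> real \<Rightarrow> real \<Rightarrow> real \<Rightarrow> real" where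
  "g_IM g l1 l2 l3 x = Inf {g l1 + alpha1 g l1 l2 * \<phi>1 + \<gamma>2 | \<phi>1 \<phi>2 \<psi>2 \<gamma>2.
      \<gamma>2 \<ge> persp (\<lambda>t. g (l2 + t) - g l2) \<phi>2 \<psi>2 \<and>
      x = l1 + \<phi>1 + \<phi>2 \<and>
      (l2 - l1) * \<psi>2 \<le> \<phi>1 \<and> \<phi>1 \<le> (l2 - l1) * 1 \<and>
      (l3 - l2) * 0 \<le> \<phi>2 \<and> \<phi>2 \<le> (l3 - l2) * \<psi>2}"

definition g_MCM :: "(real \<Rightarrow> real) \<Rightarrow> real \<Rightarrow> real \<Rightarrow> real \<Rightarrow> real \<Rightarrow> real" where
  "g_MCM g l1 l2 l3 x = Inf {g 0 * y2 + alpha1 g l1 l2 * x1 + (g l1 - alpha1 g l1 l2 * l1) * y1 + z2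
      | x1 x2 y1 y2 z2.
      x = x1 + x2 \<and>
      z2 \<ge> persp (\<lambda>t. g t - g 0) x2 y2 \<and>
      l1 * y1 \<le> x1 \<and> x1 \<le> l2 * y1 \<and>
      l2 * y2 \<le> x2 \<and> x2 \<le> l3 * y2 \<and>
      y1 + y2 = 1 \<and> y1 \<ge> 0 \<and> y2 \<ge> 0}"

end

theory Submission
  imports Defs
begin

text \<open>The two relaxations are related by an affine change of variables,
  \<open>y\<^sup>2 = \<psi>\<^sup>2\<close>, \<open>y\<^sup>1 = 1 - \<psi>\<^sup>2\<close>, \<open>x\<^sup>2 = l\<^sup>2 \<psi>\<^sup>2 + \<phi>\<^sup>2\<close>, \<open>x\<^sup>1 = l\<^sup>1 + \<phi>\<^sup>1 - l\<^sup>2 \<psi>\<^sup>2\<close>,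
  under which the perspective of \<open>g\<close> recentred at \<open>l\<^sup>2\<close> becomes the perspective of
  \<open>g\<close> recentred at \<open>0\<close> minus the linear term \<open>(g(l\<^sup>2) - g(0)) \<psi>\<^sup>2\<close>, and the objectives
  differ by \<open>\<psi>\<^sup>2 (g(l\<^sup>2) - g(l\<^sup>1) - \<alpha>\<^sup>1 (l\<^sup>2 - l\<^sup>1)) = 0\<close>. Only the ordering
  of the breakpoints enters.\<close>

lemma persp_shift: "persp (\<lambda>t. f (c + t)) a b = persp f (c * b + a) b"
proof (cases "b = 0")
  case False
  then have "(c * b + a) / b = c + a / b" by (simp add: field_simps)
  then show ?thesis by (simp add: persp_def)
qed (simp add: persp_def)

lemma persp_diff_const: "persp (\<lambda>t. f t - k) a b = persp f a b - k * b"
  by (simp add: persp_def algebra_simps)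

lemma persp_recentre:
  "persp (\<lambda>t. f (c + t) - f c) a b = persp (\<lambda>t. f t - f 0) (c * b + a) b - b * (f c - f 0)"
  using persp_shift[of "\<lambda>t. f t - f c" c a b]
  by (simp add: persp_diff_const algebra_simps)

lemma alpha1_secant: "l1 \<noteq> l2 \<Longrightarrow> g l2 = g l1 + alpha1 g l1 l2 * (l2 - l1)"
  by (simp add: alpha1_def)

lemma IM_point_to_MCM_point:
  assumes "l1 < l2" "l2 < l3"
    and "\<gamma>2 \<ge> persp (\<lambda>t. g (l2 + t) - g l2) \<phi>2 \<psi>2" "x = l1 + \<phi>1 + \<phi>2"
    and "(l2 - l1) * \<psi>2 \<le> \<phi>1" "\<phi>1 \<le> l2 - l1" "0 \<le> \<phi>2" "\<phi>2 \<le> (l3 - l2) * \<psi>2"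
  shows "\<exists>x1 x2 y1 y2 z2.
      g l1 + alpha1 g l1 l2 * \<phi>1 + \<gamma>2
        = g 0 * y2 + alpha1 g l1 l2 * x1 + (g l1 - alpha1 g l1 l2 * l1) * y1 + z2 \<and>
      x = x1 + x2 \<and> z2 \<ge> persp (\<lambda>t. g t - g 0) x2 y2 \<and>
      l1 * y1 \<le> x1 \<and> x1 \<le> l2 * y1 \<and> l2 * y2 \<le> x2 \<and> x2 \<le> l3 * y2 \<and>
      y1 + y2 = 1 \<and> y1 \<ge> 0 \<and> y2 \<ge> 0"
proof -
  define x1 x2 z2 where "x1 = l1 + \<phi>1 - l2 * \<psi>2" and "x2 = l2 * \<psi>2 + \<phi>2"
    and "z2 = \<gamma>2 + \<psi>2 * (g l2 - g 0)"
  have "0 \<le> (l3 - l2) * \<psi>2" "(l2 - l1) * \<psi>2 \<le> (l2 - l1) * 1"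
    using assms(5-8) by simp_all
  then have "\<psi>2 \<ge> 0" "1 - \<psi>2 \<ge> 0"
    using assms(1,2) by (simp_all add: zero_le_mult_iff mult_le_cancel_left)
  moreover have "g l1 + alpha1 g l1 l2 * \<phi>1 + \<gamma>2
      = g 0 * \<psi>2 + alpha1 g l1 l2 * x1 + (g l1 - alpha1 g l1 l2 * l1) * (1 - \<psi>2) + z2"
    using assms(1) unfolding x1_def z2_def by (simp add: alpha1_secant[of l1 l2 g] algebra_simps)
  moreover have "z2 \<ge> persp (\<lambda>t. g t - g 0) x2 \<psi>2"
    using assms(3) persp_recentre[of g l2 \<phi>2 \<psi>2] unfolding x2_def z2_def by simp
  moreover have "x = x1 + x2" "l1 * (1 - \<psi>2) \<le> x1" "x1 \<le> l2 * (1 - \<psi>2)"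
    "l2 * \<psi>2 \<le> x2" "x2 \<le> l3 * \<psi>2"
    using assms(4-8) unfolding x1_def x2_def by (simp_all add: algebra_simps)
  ultimately show ?thesis
    by (intro exI[of _ x1] exI[of _ x2] exI[of _ "1 - \<psi>2"] exI[of _ \<psi>2] exI[of _ z2]) simp
qed

lemma MCM_point_to_IM_point:
  assumes "l1 \<noteq> l2"
    and "x = x1 + x2" "z2 \<ge> persp (\<lambda>t. g t - g 0) x2 y2"
    and "l1 * y1 \<le> x1" "x1 \<le> l2 * y1" "l2 * y2 \<le> x2" "x2 \<le> l3 * y2" "y1 + y2 = 1"
  shows "\<exists>\<phi>1 \<phi>2 \<psi>2 \<gamma>2.
      g 0 * y2 + alpha1 g l1 l2 * x1 + (g l1 - alpha1 g l1 l2 * l1) * y1 + z2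
        = g l1 + alpha1 g l1 l2 * \<phi>1 + \<gamma>2 \<and>
      \<gamma>2 \<ge> persp (\<lambda>t. g (l2 + t) - g l2) \<phi>2 \<psi>2 \<and> x = l1 + \<phi>1 + \<phi>2 \<and>
      (l2 - l1) * \<psi>2 \<le> \<phi>1 \<and> \<phi>1 \<le> l2 - l1 \<and> 0 \<le> \<phi>2 \<and> \<phi>2 \<le> (l3 - l2) * \<psi>2"
proof -
  define \<phi>1 \<phi>2 \<gamma>2 where "\<phi>1 = x1 - l1 + l2 * y2" and "\<phi>2 = x2 - l2 * y2"
    and "\<gamma>2 = z2 - y2 * (g l2 - g 0)"
  have y1: "y1 = 1 - y2"
    using assms(8) by linarith
  have "g 0 * y2 + alpha1 g l1 l2 * x1 + (g l1 - alpha1 g l1 l2 * l1) * y1 + z2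
      = g l1 + alpha1 g l1 l2 * \<phi>1 + \<gamma>2"
    using assms(1) unfolding y1 \<phi>1_def \<gamma>2_def
    by (simp add: alpha1_secant[of l1 l2 g] algebra_simps)
  moreover have "\<gamma>2 \<ge> persp (\<lambda>t. g (l2 + t) - g l2) \<phi>2 y2"
    using assms(3) persp_recentre[of g l2 \<phi>2 y2] unfolding \<phi>2_def \<gamma>2_def by simp
  moreover have "x = l1 + \<phi>1 + \<phi>2" "(l2 - l1) * y2 \<le> \<phi>1" "\<phi>1 \<le> l2 - l1"
    "0 \<le> \<phi>2" "\<phi>2 \<le> (l3 - l2) * y2"
    using assms(2,4-7) unfolding \<phi>1_def \<phi>2_def y1 by (simp_all add: algebra_simps)
  ultimately show ?thesis
    by (intro exI[of _ \<phi>1] exI[of _ \<phi>2] exI[of _ y2] exI[of _ \<gamma>2]) simp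
qed

theorem proposition1:
  fixes g :: "real \<Rightarrow> real" and l1 l2 l3 x :: real
  assumes "l1 < l2" and "l2 < l3"
    and "continuous_on {l1..l3} g"
    and "concave_on {l1..l2} g"
    and "convex_on {l2..l3} g"
    and "x \<in> {l1..l3}"
  shows "g_IM g l1 l2 l3 x = g_MCM g l1 l2 l3 x"
  unfolding g_IM_def g_MCM_def
proof (rule arg_cong[where f = Inf], intro equalityI subsetI, goal_cases)
  case (1 v)
  then obtain \<phi>1 \<phi>2 \<psi>2 \<gamma>2 where "v = g l1 + alpha1 g l1 l2 * \<phi>1 + \<gamma>2"
    and "\<gamma>2 \<ge> persp (\<lambda>t. g (l2 + t) - g l2) \<phi>2 \<psi>2" "x = l1 + \<phi>1 + \<phi>2"
    and "(l2 - l1) * \<psi>2 \<le> \<phi>1" "\<phi>1 \<le> l2 - l1" "0 \<le> \<phi>2" "\<phi>2 \<le> (l3 - l2) * \<psi>2"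
    by auto
  with IM_point_to_MCM_point[OF assms(1,2)] show ?case
    by blast
next
  case (2 v)
  then obtain x1 x2 y1 y2 z2
    where "v = g 0 * y2 + alpha1 g l1 l2 * x1 + (g l1 - alpha1 g l1 l2 * l1) * y1 + z2"
    and "x = x1 + x2" "z2 \<ge> persp (\<lambda>t. g t - g 0) x2 y2"
    and "l1 * y1 \<le> x1" "x1 \<le> l2 * y1" "l2 * y2 \<le> x2" "x2 \<le> l3 * y2" "y1 + y2 = 1"
    by auto
  with MCM_point_to_IM_point[of l1 l2] assms(1) show ?case
    by auto
qed

end
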